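(* Let $n\ge2$, $d\ge1$, $\alpha\in(0,1)$ and let $\boldsymbol\sigma$ be arbitrary positive noise levels (heteroscedastic model with $\sigma_i^\#=\sigma_{\pi^*(i)}$). Let $$\kappa=4\max\Big\{\Big(2\log\frac{8n^2}{\alpha}\Big)^{1/2},\ \Big(d\log\frac{4n^2}{\alpha}\Big)^{1/4}\Big\}$$ and $\bar\Theta_\kappa=\{\boldsymbol\theta\in(\mathbb R^d)^n:\ \bar\kappa(\boldsymbol\theta,\boldsymbol\sigma)\ge\kappa\}$. If $\hat\pi$ is either $\pi^{\mathrm{LSNS}}$ (computed with the known noise levels) or $\pi^{\mathrm{LSL}}$, then $$\max_{\pi^*\in\mathfrak S_n}\ \sup_{\boldsymbol\theta\in\bar\Theta_\kappa}\mathbf E_{\boldsymbol\theta,\boldsymbol\sigma,\pi^*}\big[\delta_H(\hat\pi,\pi^* )\big]\le\alpha.$$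
   Context: Model: integers $n\ge2$, $d\ge1$. Unknown parameters: $\boldsymbol\theta=(\theta_1,\dots,\theta_n)$ with $\theta_i\in\mathbb R^d$, noise levels $\boldsymbol\sigma=(\sigma_1,\dots,\sigma_n)$ with $\sigma_i>0$, and a permutation $\pi^*\in\mathfrak S_n$ (the symmetric group on $\{1,\dots,n\}$). One observes $X_i=\theta_i+\sigma_i\xi_i$, $X_i^\#=\theta_{\pi^*(i)}+\sigma_i^\#\xi_i^\#$, $i=1,\dots,n$, where $\sigma_i^\#=\sigma_{\pi^*(i)}$ and $\xi_1,\dots,\xi_n,\xi_1^\#,\dots,\xi_n^\#$ are i.i.d. $\mathcal N(0,I_d)$. The law of the data is $\mathbf P_{\boldsymbol\theta,\boldsymbol\sigma,\pi^*}$ with expectation $\mathbf E_{\boldsymbol\theta,\boldsymbol\sigma,\pi^*}$. Ties in argmins are broken arbitrarily (measurably). Estimators: $\pi^{\mathrm{LSNS}}=\arg\min_{\pi\in\mathfrak S_n}\sum_{i=1}^n\frac{\|X_{\pi(i)}-X_i^\#\|^2}{\sigma_{\pi(i)}^2+(\sigma_i^\#)^2}$ and $\pi^{\mathrm{LSL}}=\arg\min_{\pi\in\mathfrak S_n}\sum_{i=1}^n\log\|X_{\pi(i)}-X_i^\#\|^2$. Relative separation distance: $\bar\kappa(\boldsymbol\theta,\boldsymbol\sigma)=\min_{i\ne j}\frac{\|\theta_i-\theta_j\|}{(\sigma_i^2+\sigma_j^2)^{1/2}}$. Normalized Hamming distance: $\delta_H(\pi,\pi')=\frac1n\sum_{k=1}^n\mathbb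 1_{\{\pi(k)\ne\pi'(k)\}}$. *)

theory Defs
  imports "HOL-Probability.Probability" "HOL-Combinatorics.Permutations"
begin

(* Coordinates: index (b,i,k) with b = False for the first sample X_i, b = True for
   the second sample X^#_i, i < n the item index (0-based), k < d the coordinate. *)
definition idx :: "nat \<Rightarrow> nat \<Rightarrow> (bool \<times> nat \<times> nat) set" where
  "idx n d = UNIV \<times> {..<n} \<times> {..<d}"

definition noise :: "nat \<Rightarrow> nat \<Rightarrow> (bool \<times> nat \<times> nat \<Rightarrow> real) measure" where
  "noise n d = PiM (idx n d) (\<lambda>_. density lborel std_normal_density)"

definition obs_space :: "nat \<Rightarrow> nat \<Rightarrow> (bool \<times> nat \<times> nat \<Rightarrow> real) measure" where
  "obs_space n d = PiM (idx n d) (\<lambda>_. borel)"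

definition obs :: "nat \<Rightarrow> nat \<Rightarrow> (nat \<Rightarrow> nat \<Rightarrow> real) \<Rightarrow> (nat \<Rightarrow> real) \<Rightarrow> (nat \<Rightarrow> nat)
    \<Rightarrow> (bool \<times> nat \<times> nat \<Rightarrow> real) \<Rightarrow> (bool \<times> nat \<times> nat \<Rightarrow> real)" where
  "obs n d \<theta> \<sigma> \<pi>s \<omega> = restrict (\<lambda>(b, i, k).
      if b then \<theta> (\<pi>s i) k + \<sigma> (\<pi>s i) * \<omega> (True, i, k)
      else \<theta> i k + \<sigma> i * \<omega> (False, i, k)) (idx n d)"

definition data_law :: "nat \<Rightarrow> nat \<Rightarrow> (nat \<Rightarrow> nat \<Rightarrow> real) \<Rightarrow> (nat \<Rightarrow> real) \<Rightarrow> (nat \<Rightarrow> nat)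
    \<Rightarrow> (bool \<times> nat \<times> nat \<Rightarrow> real) measure" where
  "data_law n d \<theta> \<sigma> \<pi>s = distr (noise n d) (obs_space n d) (obs n d \<theta> \<sigma> \<pi>s)"

definition sqdist :: "nat \<Rightarrow> (nat \<Rightarrow> real) \<Rightarrow> (nat \<Rightarrow> real) \<Rightarrow> real" where
  "sqdist d x y = (\<Sum>k<d. (x k - y k)^2)"

definition Xobs :: "(bool \<times> nat \<times> nat \<Rightarrow> real) \<Rightarrow> nat \<Rightarrow> nat \<Rightarrow> real" where
  "Xobs y i k = y (False, i, k)"

definition Xsharp :: "(bool \<times> nat \<times> nat \<Rightarrow> real) \<Rightarrow> nat \<Rightarrow> nat \<Rightarrow> real" where
  "Xsharp y i k = y (True, i, k)"

(* LSNS criterion, with sigma^#_i = sigmas i *)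
definition cost_LSNS :: "nat \<Rightarrow> nat \<Rightarrow> (nat \<Rightarrow> real) \<Rightarrow> (nat \<Rightarrow> real)
    \<Rightarrow> (bool \<times> nat \<times> nat \<Rightarrow> real) \<Rightarrow> (nat \<Rightarrow> nat) \<Rightarrow> real" where
  "cost_LSNS n d \<sigma> \<sigma>s y \<pi> =
     (\<Sum>i<n. sqdist d (Xobs y (\<pi> i)) (Xsharp y i) / ((\<sigma> (\<pi> i))^2 + (\<sigma>s i)^2))"

definition cost_LSL :: "nat \<Rightarrow> nat \<Rightarrow> (bool \<times> nat \<times> nat \<Rightarrow> real) \<Rightarrow> (nat \<Rightarrow> nat) \<Rightarrow> real" where
  "cost_LSL n d y \<pi> = (\<Sum>i<n. ln (sqdist d (Xobs y (\<pi> i)) (Xsharp y i)))"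

definition is_argmin_perm :: "nat \<Rightarrow> ((nat \<Rightarrow> nat) \<Rightarrow> real) \<Rightarrow> (nat \<Rightarrow> nat) \<Rightarrow> bool" where
  "is_argmin_perm n c p \<longleftrightarrow> p permutes {..<n} \<and> (\<forall>\<pi>. \<pi> permutes {..<n} \<longrightarrow> c p \<le> c \<pi>)"

definition kappa_bar :: "nat \<Rightarrow> nat \<Rightarrow> (nat \<Rightarrow> nat \<Rightarrow> real) \<Rightarrow> (nat \<Rightarrow> real) \<Rightarrow> real" where
  "kappa_bar n d \<theta> \<sigma> = Min {sqrt (sqdist d (\<theta> i) (\<theta> j)) / sqrt ((\<sigma> i)^2 + (\<sigma> j)^2) | i j.
       i < n \<and> j < n \<and> i \<noteq> j}"

definition delta_H :: "nat \<Rightarrow> (nat \<Rightarrow> nat) \<Rightarrow> (nat \<Rightarrow> nat) \<Rightarrow> real" where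
  "delta_H n \<pi> \<pi>' = real (card {k \<in> {..<n}. \<pi> k \<noteq> \<pi>' k}) / real n"

end

theory Submission
  imports Defs
begin

text \<open>For each pair \<open>(j, i)\<close> the normalised distance \<open>S j i = |X j - X# i|^2 / (\<sigma> j^2 + \<sigma># i^2)\<close>
  is a noncentral \<open>\<chi>^2\<close> variable with \<open>d\<close> degrees of freedom whose noncentrality vanishes for
  \<open>j = \<pi>* i\<close> and is at least \<open>\<kappa>^2\<close> otherwise, where \<open>\<kappa>\<close> is the relative separation.
  With the threshold \<open>T = d + \<kappa>^2/4\<close>, Chernoff bounds and a union bound over the \<open>n^2\<close> pairs
  show that with probability at least \<open>1 - \<alpha>\<close> every matched statistic lies in \<open>(0, T)\<close> and
  every mismatched one exceeds \<open>T\<close>. On that event \<open>\<pi>*\<close> is the unique minimiser of both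
  criteria: of LSNS because it is the sum of the \<open>S (\<pi> i) i\<close>, and of LSL because in addition
  \<open>\<Sum>i. ln (\<sigma> (\<pi> i)^2 + \<sigma> (\<pi>* i)^2)\<close> is minimal at \<open>\<pi> = \<pi>*\<close> by AM-GM. As
  \<open>\<delta>\<^sub>H \<le> 1\<close>, its expectation is at most the probability of the complementary event.\<close>

section \<open>Gaussian integrals\<close>

lemma measurable_PiM_apply_pair:
  assumes f: "case_prod f \<in> borel_measurable (N \<Otimes>\<^sub>M N)" and "p \<in> I" "q \<in> I"
  shows "(\<lambda>\<omega>. f (\<omega> p) (\<omega> q)) \<in> borel_measurable (PiM I (\<lambda>_. N))"
proof -
  have "(\<lambda>\<omega>. (\<omega> p, \<omega> q)) \<in> measurable (PiM I (\<lambda>_. N)) (N \<Otimes>\<^sub>M N)"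
    using assms(2,3) by (intro measurable_Pair) auto
  from measurable_comp[OF this f] show ?thesis by (simp add: comp_def)
qed

lemma nn_integral_PiM_apply_pair:
  assumes N: "prob_space N" and f: "case_prod f \<in> borel_measurable (N \<Otimes>\<^sub>M N)" and "p \<noteq> q"
  shows "(\<integral>\<^sup>+\<omega>. f (\<omega> p) (\<omega> q) \<partial>PiM {p, q} (\<lambda>_. N)) = (\<integral>\<^sup>+a. \<integral>\<^sup>+b. f a b \<partial>N \<partial>N)"
proof -
  interpret N: prob_space N by (rule N)
  interpret product_sigma_finite "\<lambda>_. N" by standard
  have "(\<integral>\<^sup>+\<omega>. f (\<omega> p) (\<omega> q) \<partial>PiM {p, q} (\<lambda>_. N)) = (\<integral>\<^sup>+z. f (fst z) (snd z) \<partial>(N \<Otimes>\<^sub>M N))"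
    using assms by (intro product_nn_integral_pair) (auto simp: case_prod_beta')
  also have "\<dots> = (\<integral>\<^sup>+a. \<integral>\<^sup>+b. f a b \<partial>N \<partial>N)"
    using N.nn_integral_fst[of "case_prod f" N] f by (simp add: case_prod_beta')
  finally show ?thesis .
qed

text \<open>The pairs are peeled off one at a time, by Fubini on \<open>I = (I - {p k, q k}) \<union> {p k, q k}\<close>.\<close>
lemma nn_integral_PiM_prod_pairs:
  fixes N :: "'a measure" and I :: "'i set" and K :: "'k set"
    and f :: "'k \<Rightarrow> 'a \<Rightarrow> 'a \<Rightarrow> ennreal"
  assumes N: "prob_space N" and fin: "finite K" "finite I"
    and inj: "inj_on p K" "inj_on q K" and sub: "p ` K \<subseteq> I" "q ` K \<subseteq> I"
    and disj: "p ` K \<inter> q ` K = {}"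
    and meas: "\<And>k. k \<in> K \<Longrightarrow> case_prod (f k) \<in> borel_measurable (N \<Otimes>\<^sub>M N)"
  shows "(\<integral>\<^sup>+\<omega>. (\<Prod>k\<in>K. f k (\<omega> (p k)) (\<omega> (q k))) \<partial>PiM I (\<lambda>_. N))
       = (\<Prod>k\<in>K. \<integral>\<^sup>+a. \<integral>\<^sup>+b. f k a b \<partial>N \<partial>N)"
  using fin inj sub disj meas
proof (induction K arbitrary: I rule: finite_induct)
  case empty
  interpret prob_space "PiM I (\<lambda>_. N)" by (rule prob_space_PiM) (use N in auto)
  show ?case by (simp add: emeasure_space_1)
next
  case (insert k K)
  interpret product_sigma_finite "\<lambda>_. N" using N by (simp add: product_sigma_finite_def prob_space_imp_sigma_finite)
  define J where "J = {p k, q k}"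
  define I' where "I' = I - J"
  define g where "g x = (\<Prod>k\<in>K. f k (x (p k)) (x (q k)))" for x :: "'i \<Rightarrow> 'a"
  have pq: "p k \<noteq> q k" using insert.prems(6) by blast
  have IJ: "I' \<inter> J = {}" "finite I'" "finite J" "I' \<union> J = I"
    using insert.prems(1,4,5) by (auto simp: I'_def J_def)
  have K_in_I': "p k' \<in> I'" "q k' \<in> I'" if "k' \<in> K" for k'
  proof -
    have "k' \<noteq> k" using that insert.hyps(2) by blast
    then have "p k' \<noteq> p k" "q k' \<noteq> q k"
      using insert.prems(2,3) that unfolding inj_on_def by blast+
    moreover have "p k' \<noteq> q k" "q k' \<noteq> p k" using insert.prems(6) that by blast+
    ultimately show "p k' \<in> I'" "q k' \<in> I'"
      using insert.prems(4,5) that by (auto simp: I'_def J_def)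
  qed
  have meas_k: "case_prod (f k) \<in> borel_measurable (N \<Otimes>\<^sub>M N)"
    using insert.prems(7) by auto
  have meas_g: "g \<in> borel_measurable (PiM I'' (\<lambda>_. N))" if "p ` K \<subseteq> I''" "q ` K \<subseteq> I''" for I''
    unfolding g_def using that insert.prems(7)
    by (intro borel_measurable_prod_ennreal measurable_PiM_apply_pair) auto
  have "(\<integral>\<^sup>+\<omega>. (\<Prod>k\<in>insert k K. f k (\<omega> (p k)) (\<omega> (q k))) \<partial>PiM I (\<lambda>_. N))
      = (\<integral>\<^sup>+\<omega>. f k (\<omega> (p k)) (\<omega> (q k)) * g \<omega> \<partial>PiM (I' \<union> J) (\<lambda>_. N))"
    using insert.hyps by (simp add: IJ(4) g_def)
  also have "\<dots> = (\<integral>\<^sup>+x. \<integral>\<^sup>+y. f k (y (p k)) (y (q k)) * g x \<partial>PiM J (\<lambda>_. N) \<partial>PiM I' (\<lambda>_. N))"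
  proof (subst product_nn_integral_fold[OF IJ(1-3)])
    show "(\<lambda>\<omega>. f k (\<omega> (p k)) (\<omega> (q k)) * g \<omega>) \<in> borel_measurable (PiM (I' \<union> J) (\<lambda>_. N))"
      using insert.prems(4,5) IJ(4)
      by (intro borel_measurable_times_ennreal measurable_PiM_apply_pair meas_g meas_k) auto
    have "g (merge I' J (x, y)) = g x" for x y
      unfolding g_def using K_in_I' by (intro prod.cong refl) (simp add: merge_def)
    moreover have "merge I' J (x, y) (p k) = y (p k)" "merge I' J (x, y) (q k) = y (q k)"
      for x y :: "'i \<Rightarrow> 'a"
      by (auto simp: merge_def I'_def J_def)
    ultimately show "(\<integral>\<^sup>+x. \<integral>\<^sup>+y. f k (merge I' J (x, y) (p k)) (merge I' J (x, y) (q k))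
          * g (merge I' J (x, y)) \<partial>PiM J (\<lambda>_. N) \<partial>PiM I' (\<lambda>_. N))
      = (\<integral>\<^sup>+x. \<integral>\<^sup>+y. f k (y (p k)) (y (q k)) * g x \<partial>PiM J (\<lambda>_. N) \<partial>PiM I' (\<lambda>_. N))"
      by simp
  qed
  also have "\<dots> = (\<integral>\<^sup>+x. (\<integral>\<^sup>+a. \<integral>\<^sup>+b. f k a b \<partial>N \<partial>N) * g x \<partial>PiM I' (\<lambda>_. N))"
  proof (intro nn_integral_cong)
    fix x
    have "(\<integral>\<^sup>+y. f k (y (p k)) (y (q k)) * g x \<partial>PiM J (\<lambda>_. N))
        = (\<integral>\<^sup>+y. f k (y (p k)) (y (q k)) \<partial>PiM J (\<lambda>_. N)) * g x"
      by (rule nn_integral_multc) (intro measurable_PiM_apply_pair meas_k, auto simp: J_def)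
    then show "(\<integral>\<^sup>+y. f k (y (p k)) (y (q k)) * g x \<partial>PiM J (\<lambda>_. N))
        = (\<integral>\<^sup>+a. \<integral>\<^sup>+b. f k a b \<partial>N \<partial>N) * g x"
      unfolding J_def by (simp add: nn_integral_PiM_apply_pair[OF N meas_k pq])
  qed
  also have "\<dots> = (\<integral>\<^sup>+a. \<integral>\<^sup>+b. f k a b \<partial>N \<partial>N) * (\<integral>\<^sup>+x. g x \<partial>PiM I' (\<lambda>_. N))"
    using K_in_I' by (intro nn_integral_cmult meas_g) auto
  also have "(\<integral>\<^sup>+x. g x \<partial>PiM I' (\<lambda>_. N)) = (\<Prod>k\<in>K. \<integral>\<^sup>+a. \<integral>\<^sup>+b. f k a b \<partial>N \<partial>N)"
    unfolding g_def using insert.prems K_in_I' IJ(2)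
    by (intro insert.IH) (auto simp: inj_on_insert)
  finally show ?case using insert.hyps by simp
qed

abbreviation std_normal :: "real measure" where
  "std_normal \<equiv> density lborel std_normal_density"

lemma prob_space_std_normal: "prob_space std_normal"
  by (rule prob_space_normal_density) simp

lemma nn_integral_normal_density: "0 < s \<Longrightarrow> (\<integral>\<^sup>+x. ennreal (normal_density m s x) \<partial>lborel) = 1"
  by (subst nn_integral_eq_integral) (auto intro: integrable_normal_density simp: integral_normal_density)

text \<open>Completing the square in the exponent.\<close>
lemma std_normal_density_times_exp_square:
  fixes t u c x :: real
  assumes a: "0 < 1 - 2*t*c^2"
  shows "std_normal_density x * exp (t*(u + c*x)^2)
    = exp (t*u^2/(1 - 2*t*c^2)) / sqrt (1 - 2*t*c^2) * normal_density (2*t*u*c/(1 - 2*t*c^2)) (1/sqrt (1 - 2*t*c^2)) x"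
proof -
  define a where "a = 1 - 2*t*c^2"
  have ap: "0 < a" using assms by (simp add: a_def)
  have sa: "sqrt a > 0" using ap by simp
  have sq: "(1/sqrt a)\<^sup>2 = 1/a" using ap by (simp add: power_divide)
  have e1: "a*(x - 2*t*u*c/a)^2 = a*x^2 - 4*t*u*c*x + 4*t^2*u^2*c^2/a"
    using ap by (simp add: field_simps power2_eq_square)
  have e2: "t*u^2/a - 2*t^2*u^2*c^2/a = t*u^2"
  proof -
    have "t*u^2/a - 2*t^2*u^2*c^2/a = t*u^2*(1 - 2*t*c^2)/a" using ap by (simp add: field_simps power2_eq_square)
    also have "\<dots> = t*u^2" using ap by (simp add: a_def)
    finally show ?thesis .
  qed
  have e: "- x\<^sup>2 / 2 + t*(u + c*x)^2 = t*u^2/a + (-(x - 2*t*u*c/a)\<^sup>2 / (2 * (1/sqrt a)\<^sup>2))"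
  proof -
    have "-(x - 2*t*u*c/a)\<^sup>2 / (2 * (1/sqrt a)\<^sup>2) = - (a*(x - 2*t*u*c/a)^2) / 2"
      unfolding sq using ap by (simp add: field_simps)
    also have "\<dots> = -(a*x^2 - 4*t*u*c*x + 4*t^2*u^2*c^2/a)/2" unfolding e1 ..
    finally have "t*u^2/a + (-(x - 2*t*u*c/a)\<^sup>2 / (2 * (1/sqrt a)\<^sup>2)) = (t*u^2/a - 2*t^2*u^2*c^2/a) - a*x^2/2 + 2*t*u*c*x"
      by (simp add: field_simps)
    also have "\<dots> = t*u^2 - a*x^2/2 + 2*t*u*c*x" unfolding e2 ..
    also have "\<dots> = - x\<^sup>2 / 2 + t*(u + c*x)^2" by (simp add: a_def power2_eq_square field_simps)
    finally show ?thesis by simp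
  qed
  have s2: "sqrt (2 * pi * (1/sqrt a)\<^sup>2) = sqrt (2*pi) / sqrt a"
    using ap by (simp add: power_divide real_sqrt_divide real_sqrt_mult)
  have "std_normal_density x * exp (t*(u + c*x)^2) = (1 / sqrt (2 * pi)) * exp (- x\<^sup>2 / 2 + t*(u + c*x)^2)"
    by (simp add: std_normal_density_def mult_exp_exp algebra_simps)
  also have "\<dots> = (1 / sqrt (2 * pi)) * exp (t*u^2/a) * exp (-(x - 2*t*u*c/a)\<^sup>2 / (2 * (1/sqrt a)\<^sup>2))"
    unfolding e by (simp add: mult.assoc mult_exp_exp)
  also have "\<dots> = exp (t*u^2/a) / sqrt a * normal_density (2*t*u*c/a) (1/sqrt a) x"
    unfolding normal_density_def s2 using sa by (simp add: field_simps)
  finally show ?thesis by (simp add: a_def)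
qed

lemma nn_integral_exp_square_std_normal:
  fixes t u c :: real
  assumes a: "0 < 1 - 2*t*c^2"
  shows "(\<integral>\<^sup>+x. ennreal (exp (t*(u + c*x)^2)) \<partial>std_normal)
       = ennreal (exp (t*u^2/(1 - 2*t*c^2)) / sqrt (1 - 2*t*c^2))"
proof -
  define K where "K = exp (t*u^2/(1 - 2*t*c^2)) / sqrt (1 - 2*t*c^2)"
  have K: "K \<ge> 0" using a by (simp add: K_def)
  have "(\<integral>\<^sup>+x. ennreal (exp (t*(u + c*x)^2)) \<partial>std_normal)
      = (\<integral>\<^sup>+x. ennreal (std_normal_density x) * ennreal (exp (t*(u + c*x)^2)) \<partial>lborel)"
    by (subst nn_integral_density) auto
  also have "\<dots> = (\<integral>\<^sup>+x. ennreal K * ennreal (normal_density (2*t*u*c/(1 - 2*t*c^2)) (1/sqrt (1 - 2*t*c^2)) x) \<partial>lborel)"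
    using std_normal_density_times_exp_square[OF a] K
    by (intro nn_integral_cong) (simp add: K_def ennreal_mult'[symmetric])
  also have "\<dots> = ennreal K"
    using a by (subst nn_integral_cmult) (auto simp: nn_integral_normal_density)
  finally show ?thesis by (simp add: K_def)
qed

lemma nn_integral_exp_square_std_normal2:
  fixes t m c1 c2 :: real
  assumes t: "t < 1/2" and c: "c1^2 + c2^2 = 1"
  shows "(\<integral>\<^sup>+a. \<integral>\<^sup>+b. ennreal (exp (t*(m + c1*a + c2*b)^2)) \<partial>std_normal \<partial>std_normal)
       = ennreal (exp (t*m^2/(1 - 2*t)) / sqrt (1 - 2*t))"
proof -
  define a2 where "a2 = 1 - 2*t*c2^2"
  have c2le: "c2^2 \<le> 1" "c1^2 \<le> 1" using c zero_le_power2[of c1] zero_le_power2[of c2] by linarith+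
  have a2: "0 < a2"
  proof (cases "t \<ge> 0")
    case True
    then have "t*c2^2 \<le> t" using c2le mult_left_mono[of "c2^2" 1 t] by simp
    then show ?thesis using t by (simp add: a2_def)
  next
    case False
    then have "t*c2^2 \<le> 0" by (simp add: mult_nonpos_nonneg)
    then show ?thesis by (simp add: a2_def)
  qed
  define t' where "t' = t / a2"
  have a1: "1 - 2*t'*c1^2 = (1 - 2*t)/a2"
  proof -
    have cc: "t*(2*c1^2) + t*(2*c2^2) = t*2" using c by (simp add: algebra_simps flip: distrib_left)
    show ?thesis using a2 cc by (simp add: t'_def a2_def field_simps)
  qed
  have a1p: "0 < 1 - 2*t'*c1^2" using a1 a2 t by simp
  have "(\<integral>\<^sup>+a. \<integral>\<^sup>+b. ennreal (exp (t*(m + c1*a + c2*b)^2)) \<partial>std_normal \<partial>std_normal)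
      = (\<integral>\<^sup>+a. ennreal (exp (t'*(m + c1*a)^2) / sqrt a2) \<partial>std_normal)"
  proof (intro nn_integral_cong)
    fix x
    show "(\<integral>\<^sup>+b. ennreal (exp (t*(m + c1*x + c2*b)^2)) \<partial>std_normal) = ennreal (exp (t'*(m + c1*x)^2) / sqrt a2)"
      using nn_integral_exp_square_std_normal[of t c2 "m + c1*x"] a2 by (simp add: a2_def t'_def mult.commute)
  qed
  also have "\<dots> = (\<integral>\<^sup>+a. ennreal (exp (t'*(m + c1*a)^2)) * ennreal (1 / sqrt a2) \<partial>std_normal)"
    using a2 by (intro nn_integral_cong) (simp add: ennreal_mult'[symmetric])
  also have "\<dots> = (\<integral>\<^sup>+a. ennreal (exp (t'*(m + c1*a)^2)) \<partial>std_normal) * ennreal (1 / sqrt a2)"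
    by (rule nn_integral_multc) auto
  also have "\<dots> = ennreal (exp (t'*m^2/(1 - 2*t'*c1^2)) / sqrt (1 - 2*t'*c1^2)) * ennreal (1 / sqrt a2)"
    by (subst nn_integral_exp_square_std_normal[OF a1p]) simp
  also have "\<dots> = ennreal (exp (t'*m^2/(1 - 2*t'*c1^2)) / sqrt (1 - 2*t'*c1^2) * (1 / sqrt a2))"
    using a2 a1p by (simp add: ennreal_mult'[symmetric])
  also have "exp (t'*m^2/(1 - 2*t'*c1^2)) / sqrt (1 - 2*t'*c1^2) * (1 / sqrt a2) = exp (t*m^2/(1 - 2*t)) / sqrt (1 - 2*t)"
  proof -
    have "t'*m^2/(1 - 2*t'*c1^2) = t*m^2/(1 - 2*t)"
      unfolding a1 using a2 t by (simp add: t'_def field_simps)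
    moreover have "sqrt (1 - 2*t'*c1^2) * sqrt a2 = sqrt (1 - 2*t)"
      unfolding a1 using a2 t by (simp add: real_sqrt_divide)
    ultimately show ?thesis using a2 by (simp add: field_simps)
  qed
  finally show ?thesis .
qed

section \<open>Tail bounds for the normalised pair distances\<close>

lemma prob_space_noise: "prob_space (noise n d)"
  unfolding noise_def by (rule prob_space_PiM) (rule prob_space_std_normal)

lemma noise_component_measurable:
  assumes "x \<in> idx n d"
  shows "(\<lambda>\<omega>. \<omega> x) \<in> borel_measurable (noise n d)"
proof -
  have "(\<lambda>\<omega>. \<omega> x) \<in> measurable (noise n d) std_normal"
    unfolding noise_def using assms by (rule measurable_component_singleton)
  then show ?thesis by (simp add: measurable_def)
qed

lemma obs_measurable:
  "obs n d \<theta> \<sigma> \<pi>s \<in> measurable (noise n d) (obs_space n d)"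
  unfolding obs_def obs_space_def
proof (rule measurable_restrict)
  fix x assume x: "x \<in> idx n d"
  obtain b i k where xe: "x = (b, i, k)" by (cases x) auto
  have ik: "i < n" "k < d" using x xe by (auto simp: idx_def)
  have m1: "(\<lambda>\<omega>. \<omega> (True, i, k)) \<in> borel_measurable (noise n d)"
    using ik by (intro noise_component_measurable) (auto simp: idx_def)
  have m2: "(\<lambda>\<omega>. \<omega> (False, i, k)) \<in> borel_measurable (noise n d)"
    using ik by (intro noise_component_measurable) (auto simp: idx_def)
  show "(\<lambda>\<omega>. case x of (b, i, k) \<Rightarrow> if b then \<theta> (\<pi>s i) k + \<sigma> (\<pi>s i) * \<omega> (True, i, k)
          else \<theta> i k + \<sigma> i * \<omega> (False, i, k)) \<in> measurable (noise n d) borel"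
    unfolding xe using m1 m2 by (cases b) auto
qed

definition pair_stat :: "nat \<Rightarrow> nat \<Rightarrow> (nat \<Rightarrow> nat \<Rightarrow> real) \<Rightarrow> (nat \<Rightarrow> real) \<Rightarrow> (nat \<Rightarrow> nat) \<Rightarrow> nat \<Rightarrow> nat
   \<Rightarrow> (bool \<times> nat \<times> nat \<Rightarrow> real) \<Rightarrow> real" where
  "pair_stat n d \<theta> \<sigma> \<pi>s j i \<omega> = sqdist d (Xobs (obs n d \<theta> \<sigma> \<pi>s \<omega>) j) (Xsharp (obs n d \<theta> \<sigma> \<pi>s \<omega>) i)
       / ((\<sigma> j)^2 + (\<sigma> (\<pi>s i))^2)"

definition pair_noncentrality :: "nat \<Rightarrow> (nat \<Rightarrow> nat \<Rightarrow> real) \<Rightarrow> (nat \<Rightarrow> real) \<Rightarrow> (nat \<Rightarrow> nat) \<Rightarrow> nat \<Rightarrow> nat \<Rightarrow> real" where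
  "pair_noncentrality d \<theta> \<sigma> \<pi>s j i = sqdist d (\<theta> j) (\<theta> (\<pi>s i)) / ((\<sigma> j)^2 + (\<sigma> (\<pi>s i))^2)"

lemma pair_stat_expand:
  assumes "i < n" "j < n" "\<sigma> j > 0" "\<sigma> (\<pi>s i) > 0"
  defines "S \<equiv> sqrt ((\<sigma> j)^2 + (\<sigma> (\<pi>s i))^2)"
  shows "pair_stat n d \<theta> \<sigma> \<pi>s j i \<omega> = (\<Sum>k<d. ((\<theta> j k - \<theta> (\<pi>s i) k)/S + (\<sigma> j / S) * \<omega> (False, j, k)
            + (- \<sigma> (\<pi>s i) / S) * \<omega> (True, i, k))^2)"
    and "pair_noncentrality d \<theta> \<sigma> \<pi>s j i = (\<Sum>k<d. ((\<theta> j k - \<theta> (\<pi>s i) k)/S)^2)"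
    and "(\<sigma> j / S)^2 + (- \<sigma> (\<pi>s i) / S)^2 = 1"
proof -
  have Sp: "S > 0" using assms by (simp add: S_def add_pos_pos)
  have S2: "S^2 = (\<sigma> j)^2 + (\<sigma> (\<pi>s i))^2" using assms by (simp add: S_def add_pos_pos)
  have ob: "obs n d \<theta> \<sigma> \<pi>s \<omega> (False, j, k) = \<theta> j k + \<sigma> j * \<omega> (False, j, k)"
    "obs n d \<theta> \<sigma> \<pi>s \<omega> (True, i, k) = \<theta> (\<pi>s i) k + \<sigma> (\<pi>s i) * \<omega> (True, i, k)" if "k < d" for k
    using assms that by (auto simp: obs_def idx_def)
  show "pair_stat n d \<theta> \<sigma> \<pi>s j i \<omega> = (\<Sum>k<d. ((\<theta> j k - \<theta> (\<pi>s i) k)/S + (\<sigma> j / S) * \<omega> (False, j, k)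
            + (- \<sigma> (\<pi>s i) / S) * \<omega> (True, i, k))^2)"
    unfolding pair_stat_def sqdist_def Xobs_def Xsharp_def S2[symmetric] sum_divide_distrib
  proof (intro sum.cong refl)
    fix k assume "k \<in> {..<d}"
    then have kd: "k < d" by simp
    have e: "(\<theta> j k - \<theta> (\<pi>s i) k) / S + \<sigma> j / S * \<omega> (False, j, k) + - \<sigma> (\<pi>s i) / S * \<omega> (True, i, k)
        = (obs n d \<theta> \<sigma> \<pi>s \<omega> (False, j, k) - obs n d \<theta> \<sigma> \<pi>s \<omega> (True, i, k)) / S"
      using Sp kd by (simp add: ob field_simps)
    show "(obs n d \<theta> \<sigma> \<pi>s \<omega> (False, j, k) - obs n d \<theta> \<sigma> \<pi>s \<omega> (True, i, k))\<^sup>2 / S\<^sup>2 =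
         ((\<theta> j k - \<theta> (\<pi>s i) k) / S + \<sigma> j / S * \<omega> (False, j, k) + - \<sigma> (\<pi>s i) / S * \<omega> (True, i, k))\<^sup>2"
      unfolding e by (simp add: power_divide)
  qed
  show "pair_noncentrality d \<theta> \<sigma> \<pi>s j i = (\<Sum>k<d. ((\<theta> j k - \<theta> (\<pi>s i) k)/S)^2)"
    unfolding pair_noncentrality_def sqdist_def S2[symmetric] sum_divide_distrib by (simp add: power_divide)
  have "(\<sigma> j / S)^2 + (- \<sigma> (\<pi>s i) / S)^2 = ((\<sigma> j)^2 + (\<sigma> (\<pi>s i))^2) / S^2"
    by (simp add: power_divide add_divide_distrib)
  also have "\<dots> = 1" using S2 Sp assms(3) by simp
  finally show "(\<sigma> j / S)^2 + (- \<sigma> (\<pi>s i) / S)^2 = 1" .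
qed

lemma pair_stat_measurable:
  assumes "i < n" "j < n" "\<sigma> j > 0" "\<sigma> (\<pi>s i) > 0"
  shows "pair_stat n d \<theta> \<sigma> \<pi>s j i \<in> borel_measurable (noise n d)"
proof -
  define S where "S = sqrt ((\<sigma> j)^2 + (\<sigma> (\<pi>s i))^2)"
  have "pair_stat n d \<theta> \<sigma> \<pi>s j i = (\<lambda>\<omega>. \<Sum>k<d. ((\<theta> j k - \<theta> (\<pi>s i) k)/S + (\<sigma> j / S) * \<omega> (False, j, k)
            + (- \<sigma> (\<pi>s i) / S) * \<omega> (True, i, k))^2)"
    using pair_stat_expand(1)[where n=n and d=d and \<theta>=\<theta> and \<sigma>=\<sigma> and \<pi>s=\<pi>s and j=j and i=i, OF assms]
    by (simp add: S_def fun_eq_iff)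
  moreover have "(\<lambda>\<omega>. \<omega> (b, l, k)) \<in> borel_measurable (noise n d)" if "l < n" "k < d" for b l k
    using that by (intro noise_component_measurable) (auto simp: idx_def)
  ultimately show ?thesis
    using assms by simp
qed

text \<open>The moment generating function of the noncentral \<open>\<chi>\<^sup>2\<close> distribution with \<open>d\<close> degrees
  of freedom: coordinatewise, \<open>S j i\<close> is the square of a unit-variance Gaussian combination of
  the independent noise variables \<open>\<xi> j k\<close> and \<open>\<xi># i k\<close>.\<close>
lemma nn_integral_exp_pair_stat:
  assumes "i < n" "j < n" "\<sigma> j > 0" "\<sigma> (\<pi>s i) > 0" "t < 1/2"
  shows "(\<integral>\<^sup>+\<omega>. ennreal (exp (t * pair_stat n d \<theta> \<sigma> \<pi>s j i \<omega>)) \<partial>noise n d)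
     = ennreal (exp (t * pair_noncentrality d \<theta> \<sigma> \<pi>s j i / (1 - 2*t)) / sqrt (1 - 2*t) ^ d)"
proof -
  define S where "S = sqrt ((\<sigma> j)^2 + (\<sigma> (\<pi>s i))^2)"
  define m where "m k = (\<theta> j k - \<theta> (\<pi>s i) k)/S" for k
  define c1 where "c1 = \<sigma> j / S"
  define c2 where "c2 = - \<sigma> (\<pi>s i) / S"
  define f where "f k a b = ennreal (exp (t*(m k + c1*a + c2*b)^2))" for k a b
  note expand = pair_stat_expand(1,2)[where n=n and d=d and \<theta>=\<theta> and \<sigma>=\<sigma> and \<pi>s=\<pi>s and j=j and i=i,
      OF assms(1-4), folded S_def m_def c1_def c2_def]
  have c: "c1^2 + c2^2 = 1"
    using pair_stat_expand(3)[where n=n and \<sigma>=\<sigma> and \<pi>s=\<pi>s and j=j and i=i, OF assms(1-4)]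
    by (simp add: S_def c1_def c2_def)
  have "(\<integral>\<^sup>+\<omega>. ennreal (exp (t * pair_stat n d \<theta> \<sigma> \<pi>s j i \<omega>)) \<partial>noise n d)
      = (\<integral>\<^sup>+\<omega>. (\<Prod>k\<in>{..<d}. f k (\<omega> (False, j, k)) (\<omega> (True, i, k))) \<partial>PiM (idx n d) (\<lambda>_. std_normal))"
    unfolding noise_def expand(1) sum_distrib_left
    by (intro nn_integral_cong) (simp add: exp_sum prod_ennreal f_def c1_def c2_def)
  also have "\<dots> = (\<Prod>k\<in>{..<d}. \<integral>\<^sup>+a. \<integral>\<^sup>+b. f k a b \<partial>std_normal \<partial>std_normal)"
  proof (rule nn_integral_PiM_prod_pairs[OF prob_space_std_normal])
    show "inj_on (\<lambda>k. (False, j, k)) {..<d}" "inj_on (\<lambda>k. (True, i, k)) {..<d}"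
      by (auto simp: inj_on_def)
    show "(\<lambda>k. (False, j, k)) ` {..<d} \<subseteq> idx n d" "(\<lambda>k. (True, i, k)) ` {..<d} \<subseteq> idx n d"
      using assms by (auto simp: idx_def)
    show "case_prod (f k) \<in> borel_measurable (std_normal \<Otimes>\<^sub>M std_normal)" for k
      unfolding f_def by measurable
  qed (auto simp: idx_def)
  also have "\<dots> = (\<Prod>k\<in>{..<d}. ennreal (exp (t*(m k)^2/(1 - 2*t)) / sqrt (1 - 2*t)))"
    unfolding f_def by (intro prod.cong refl nn_integral_exp_square_std_normal2 assms(5) c)
  also have "\<dots> = ennreal (\<Prod>k\<in>{..<d}. exp (t*(m k)^2/(1 - 2*t)) / sqrt (1 - 2*t))"
    using assms(5) by (intro prod_ennreal) simp
  also have "(\<Prod>k\<in>{..<d}. exp (t*(m k)^2/(1 - 2*t)) / sqrt (1 - 2*t))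
      = exp (t * pair_noncentrality d \<theta> \<sigma> \<pi>s j i / (1 - 2*t)) / sqrt (1 - 2*t) ^ d"
    unfolding expand(2) prod_dividef by (simp add: exp_sum[symmetric] sum_divide_distrib sum_distrib_left)
  finally show ?thesis .
qed

lemma (in prob_space) prob_ge_le_exp_moment:
  assumes f: "f \<in> borel_measurable M" and s: "0 < s" and B: "0 \<le> B"
    and moment: "(\<integral>\<^sup>+x. ennreal (exp (s * f x)) \<partial>M) = ennreal B"
  shows "prob {x \<in> space M. a \<le> f x} \<le> exp (-s * a) * B"
proof -
  have "emeasure M {x \<in> space M. a \<le> f x}
      \<le> ennreal (exp (-s * a)) * (\<integral>\<^sup>+x. ennreal (exp (s * f x)) * indicator (space M) x \<partial>M)"
    using f s by (intro Chernoff_ineq_nn_integral_ge) auto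
  also have "(\<integral>\<^sup>+x. ennreal (exp (s * f x)) * indicator (space M) x \<partial>M) = ennreal B"
    unfolding moment[symmetric] by (intro nn_integral_cong) simp
  finally show ?thesis
    using B by (simp add: emeasure_eq_measure ennreal_mult'[symmetric] ennreal_le_iff)
qed

lemma sqrt_power_eq_exp_ln:
  assumes "0 < x"
  shows "sqrt x ^ d = exp (real d / 2 * ln x)"
proof -
  have "sqrt x = exp (ln x / 2)"
    using assms by (simp add: ln_sqrt[symmetric])
  then show ?thesis
    by (simp add: exp_of_nat_mult[symmetric])
qed

lemma pair_stat_upper_tail:
  assumes "i < n" "j < n" "\<sigma> j > 0" "\<sigma> (\<pi>s i) > 0" "0 < t" "t < 1/2"
  shows "measure (noise n d) {\<omega> \<in> space (noise n d). T \<le> pair_stat n d \<theta> \<sigma> \<pi>s j i \<omega>}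
     \<le> exp (- t * T + t * pair_noncentrality d \<theta> \<sigma> \<pi>s j i / (1 - 2*t) - real d / 2 * ln (1 - 2*t))"
proof -
  interpret prob_space "noise n d" by (rule prob_space_noise)
  have "prob {\<omega> \<in> space (noise n d). T \<le> pair_stat n d \<theta> \<sigma> \<pi>s j i \<omega>}
      \<le> exp (- t * T) * (exp (t * pair_noncentrality d \<theta> \<sigma> \<pi>s j i / (1 - 2*t)) / sqrt (1 - 2*t) ^ d)"
    using assms by (intro prob_ge_le_exp_moment pair_stat_measurable nn_integral_exp_pair_stat) auto
  also have "\<dots> = exp (- t * T + t * pair_noncentrality d \<theta> \<sigma> \<pi>s j i / (1 - 2*t) - real d / 2 * ln (1 - 2*t))"
    using assms(6) unfolding exp_diff exp_add by (simp add: sqrt_power_eq_exp_ln)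
  finally show ?thesis .
qed

lemma pair_stat_lower_tail:
  assumes "i < n" "j < n" "\<sigma> j > 0" "\<sigma> (\<pi>s i) > 0" "0 < u"
  shows "measure (noise n d) {\<omega> \<in> space (noise n d). pair_stat n d \<theta> \<sigma> \<pi>s j i \<omega> \<le> T}
     \<le> exp (u * T - u * pair_noncentrality d \<theta> \<sigma> \<pi>s j i / (1 + 2*u) - real d / 2 * ln (1 + 2*u))"
proof -
  interpret prob_space "noise n d" by (rule prob_space_noise)
  have "(\<integral>\<^sup>+\<omega>. ennreal (exp (u * - pair_stat n d \<theta> \<sigma> \<pi>s j i \<omega>)) \<partial>noise n d)
      = ennreal (exp (- u * pair_noncentrality d \<theta> \<sigma> \<pi>s j i / (1 + 2*u)) / sqrt (1 + 2*u) ^ d)"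
    using nn_integral_exp_pair_stat[where n=n and d=d and \<theta>=\<theta> and \<sigma>=\<sigma> and \<pi>s=\<pi>s and j=j and i=i and t="-u"]
      assms by simp
  then have "prob {\<omega> \<in> space (noise n d). - T \<le> - pair_stat n d \<theta> \<sigma> \<pi>s j i \<omega>}
      \<le> exp (- u * - T) * (exp (- u * pair_noncentrality d \<theta> \<sigma> \<pi>s j i / (1 + 2*u)) / sqrt (1 + 2*u) ^ d)"
    using assms
    by (intro prob_ge_le_exp_moment[where f="\<lambda>\<omega>. - pair_stat n d \<theta> \<sigma> \<pi>s j i \<omega>"]
        borel_measurable_uminus pair_stat_measurable) auto
  also have "\<dots> = exp (u * T - u * pair_noncentrality d \<theta> \<sigma> \<pi>s j i / (1 + 2*u) - real d / 2 * ln (1 + 2*u))"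
    using assms(5) unfolding exp_diff by (simp add: sqrt_power_eq_exp_ln exp_minus field_simps)
  finally show ?thesis by simp
qed

section \<open>Choice of the Chernoff parameters\<close>

lemma exists_upper_chernoff_exponent:
  fixes D L s :: real
  assumes D: "0 < D" and L: "0 < L" and s1: "8*L \<le> s" and s2: "16*D*L \<le> s^2"
  shows "\<exists>t. 0 < t \<and> t < 1/2 \<and> - t*(D + s) - D/2 * ln (1 - 2*t) \<le> -L"
proof -
  \<comment> \<open>the bound \<open>4 D t^2 - t s\<close> obtained below is minimal at \<open>t = s/(8D)\<close>, capped at \<open>1/4\<close>\<close>
  define t where "t = min (1/4) (s/(8*D))"
  have "0 < s" using s1 L by linarith
  then have t: "0 < t" "t \<le> 1/4" using D by (auto simp: t_def)
  have "ln (1 - 2*t) \<ge> -(2*t) - 2*(2*t)^2"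
    using ln_one_minus_pos_lower_bound[of "2*t"] t by simp
  then have "- t*(D + s) - D/2 * ln (1 - 2*t) \<le> - t*(D + s) - D/2 * (-(2*t) - 2*(2*t)^2)"
    using D by (intro diff_left_mono mult_left_mono) auto
  also have "\<dots> = 4*D*t^2 - t * s" by (simp add: algebra_simps power2_eq_square)
  also have "\<dots> \<le> -L"
  proof (cases "s \<le> 2*D")
    case True
    then have t_eq: "t = s/(8*D)" using D by (simp add: t_def field_simps)
    have "4*D*t^2 - t * s = - (s^2/(16*D))"
      unfolding t_eq using D by (simp add: field_simps power2_eq_square)
    also have "\<dots> \<le> -L" using s2 D by (simp add: field_simps)
    finally show ?thesis .
  next
    case False
    then have t_eq: "t = 1/4" using D by (simp add: t_def field_simps)
    show ?thesis unfolding t_eq using False s1 by (simp add: power2_eq_square)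
  qed
  finally show ?thesis using t by auto
qed

lemma exists_lower_chernoff_exponent_central:
  fixes D L :: real
  assumes D: "1 \<le> D" and L: "0 < L"
  shows "\<exists>u. 0 < u \<and> - D/2 * ln (1 + 2*u) \<le> -L"
proof -
  define u where "u = (exp (2*L) - 1)/2"
  have "0 < u" using L by (simp add: u_def)
  moreover have "1 + 2*u = exp (2*L)" by (simp add: u_def field_simps)
  ultimately show ?thesis using D L by (intro exI[of _ u]) simp
qed

lemma lower_chernoff_exponent_le_quadratic:
  fixes D M T u :: real
  assumes D: "0 \<le> D" and M: "0 \<le> M" and u: "0 \<le> u" "u \<le> 1/4"
  shows "u*T - u*M/(1 + 2*u) - D/2 * ln (1 + 2*u) \<le> - u*(D + M - T) + 2*u^2*(D + M)"
proof -
  have "1 - 2*u \<le> 1/(1 + 2*u)"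
    using u by (simp add: field_simps algebra_simps power2_eq_square)
  then have "u*M*(1 - 2*u) \<le> u*M/(1 + 2*u)"
    using u M mult_left_mono[of "1 - 2*u" "1/(1 + 2*u)" "u*M"] by simp
  moreover have "2*u - (2*u)^2 \<le> ln (1 + 2*u)"
    using ln_one_plus_pos_lower_bound[of "2*u"] u by simp
  then have "D/2 * (2*u - (2*u)^2) \<le> D/2 * ln (1 + 2*u)"
    using D by (intro mult_left_mono) auto
  ultimately show ?thesis by (simp add: algebra_simps power2_eq_square)
qed

lemma exists_lower_chernoff_exponent:
  fixes D L k M :: real
  assumes D: "0 < D" and L: "0 < L" and k1: "32*L \<le> k" and k2: "256*D*L \<le> k^2"
    and M: "k \<le> M"
  shows "\<exists>u. 0 < u \<and> u*(D + k/4) - u*M/(1 + 2*u) - D/2 * ln (1 + 2*u) \<le> -L"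
proof -
  define r where "r = M - k/4"
  have "0 < k" using k1 L by linarith
  then have k: "0 < k" "k \<le> 4*r/3" and r: "0 < r" "M \<le> 4*r/3"
    using M by (auto simp: r_def)
  have "8*L*M \<le> k*M/4"
    using mult_right_mono[of "8*L" "k/4" M] k1 r M k by simp
  also have "k*M/4 \<le> 4*r^2/9"
    using mult_mono[OF k(2) r(2)] k r M by (simp add: power2_eq_square)
  finally have LM: "8*L*M \<le> 4*r^2/9" .
  have "k^2 \<le> (4*r/3)^2" using k by (intro power_mono) auto
  then have LD: "8*L*D \<le> r^2/18" using k2 by (simp add: power2_eq_square field_simps)
  define Q where "Q = D + M"
  have Q: "0 < Q" "r \<le> Q" using D r M k by (auto simp: Q_def r_def)
  \<comment> \<open>minimiser of the quadratic bound \<open>- u r + 2 u^2 Q\<close>\<close>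
  define u where "u = r/(4*Q)"
  have u: "0 < u" "u \<le> 1/4" using Q r by (auto simp: u_def field_simps)
  have "u*(D + k/4) - u*M/(1 + 2*u) - D/2 * ln (1 + 2*u) \<le> - u*(D + M - (D + k/4)) + 2*u^2*(D + M)"
    using D r Q u M k by (intro lower_chernoff_exponent_le_quadratic) (auto simp: Q_def)
  also have "\<dots> = - u*r + 2*u^2*Q" by (simp add: Q_def r_def)
  also have "\<dots> = - (r^2/(8*Q))"
    using Q by (simp add: u_def field_simps power2_eq_square)
  also have "\<dots> \<le> -L"
  proof -
    have "8*L*Q \<le> r^2"
      unfolding Q_def distrib_left using LM LD zero_le_power2[of r] by linarith
    then show ?thesis using Q by (simp add: field_simps)
  qed
  finally show ?thesis using u by auto
qed

section \<open>Probability of the bad events\<close>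

definition bad_event :: "nat \<Rightarrow> nat \<Rightarrow> (nat \<Rightarrow> nat \<Rightarrow> real) \<Rightarrow> (nat \<Rightarrow> real) \<Rightarrow> (nat \<Rightarrow> nat) \<Rightarrow> real
    \<Rightarrow> nat \<Rightarrow> nat \<Rightarrow> (bool \<times> nat \<times> nat \<Rightarrow> real) set" where
  "bad_event n d \<theta> \<sigma> \<pi>s T j i = {\<omega> \<in> space (noise n d).
     if j = \<pi>s i then pair_stat n d \<theta> \<sigma> \<pi>s j i \<omega> \<notin> {0<..<T} else pair_stat n d \<theta> \<sigma> \<pi>s j i \<omega> \<le> T}"

lemma bad_event_sets:
  assumes "i < n" "j < n" "\<forall>i<n. 0 < \<sigma> i" "\<pi>s permutes {..<n}"
  shows "bad_event n d \<theta> \<sigma> \<pi>s T j i \<in> sets (noise n d)"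
proof -
  have "\<pi>s i < n" using permutes_in_image[OF assms(4)] assms(1) by simp
  then have "pair_stat n d \<theta> \<sigma> \<pi>s j i \<in> borel_measurable (noise n d)"
    using assms(1-3) by (intro pair_stat_measurable) auto
  then show ?thesis
    unfolding bad_event_def by (cases "j = \<pi>s i") (simp_all, measurable)
qed

lemma union_bad_events_sets:
  assumes "\<forall>i<n. 0 < \<sigma> i" "\<pi>s permutes {..<n}"
  shows "(\<Union>(i, j) \<in> {..<n} \<times> {..<n}. bad_event n d \<theta> \<sigma> \<pi>s T j i) \<in> sets (noise n d)"
proof (rule sets.finite_UN)
  fix ij assume "ij \<in> {..<n} \<times> {..<n}"
  then obtain i j where "ij = (i, j)" "i < n" "j < n" by blast
  then show "(case ij of (i, j) \<Rightarrow> bad_event n d \<theta> \<sigma> \<pi>s T j i) \<in> sets (noise n d)"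
    using bad_event_sets[OF _ _ assms] by simp
qed simp

lemma prob_bad_event_matched:
  assumes "i < n" "\<pi>s i < n" "\<sigma> (\<pi>s i) > 0"
    and "1 \<le> d" "0 < L" "32*L \<le> k" "256 * real d * L \<le> k^2"
  shows "measure (noise n d) (bad_event n d \<theta> \<sigma> \<pi>s (real d + k/4) (\<pi>s i) i) \<le> 2 * exp (-L)"
proof -
  define S where "S = pair_stat n d \<theta> \<sigma> \<pi>s (\<pi>s i) i"
  define T where "T = real d + k/4"
  have central: "pair_noncentrality d \<theta> \<sigma> \<pi>s (\<pi>s i) i = 0"
    by (simp add: pair_noncentrality_def sqdist_def)
  obtain t where t: "0 < t" "t < 1/2" "- t*T - real d/2 * ln (1 - 2*t) \<le> -L"
    using exists_upper_chernoff_exponent[of "real d" L "k/4"] assms(4-7)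
    by (auto simp: T_def power_divide)
  obtain u where u: "0 < u" "- real d/2 * ln (1 + 2*u) \<le> -L"
    using exists_lower_chernoff_exponent_central[of "real d" L] assms(4,5) by auto
  have high: "measure (noise n d) {\<omega> \<in> space (noise n d). T \<le> S \<omega>} \<le> exp (-L)"
  proof -
    have "measure (noise n d) {\<omega> \<in> space (noise n d). T \<le> S \<omega>}
        \<le> exp (- t * T + t * 0 / (1 - 2*t) - real d / 2 * ln (1 - 2*t))"
      unfolding S_def central[symmetric] using assms(1-3) t(1,2) by (intro pair_stat_upper_tail) auto
    also have "\<dots> \<le> exp (-L)" using t(3) by simp
    finally show ?thesis .
  qed
  have low: "measure (noise n d) {\<omega> \<in> space (noise n d). S \<omega> \<le> 0} \<le> exp (-L)"
  proof -
    have "measure (noise n d) {\<omega> \<in> space (noise n d). S \<omega> \<le> 0}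
        \<le> exp (u * 0 - u * 0 / (1 + 2*u) - real d / 2 * ln (1 + 2*u))"
      unfolding S_def central[symmetric] using assms(1-3) u(1) by (intro pair_stat_lower_tail) auto
    also have "\<dots> \<le> exp (-L)" using u(2) by simp
    finally show ?thesis .
  qed
  have "bad_event n d \<theta> \<sigma> \<pi>s T (\<pi>s i) i
      = {\<omega> \<in> space (noise n d). T \<le> S \<omega>} \<union> {\<omega> \<in> space (noise n d). S \<omega> \<le> 0}"
    by (auto simp: bad_event_def S_def)
  moreover have "S \<in> borel_measurable (noise n d)"
    unfolding S_def using assms by (intro pair_stat_measurable) auto
  ultimately have "measure (noise n d) (bad_event n d \<theta> \<sigma> \<pi>s T (\<pi>s i) i)
      \<le> measure (noise n d) {\<omega> \<in> space (noise n d). T \<le> S \<omega>}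
       + measure (noise n d) {\<omega> \<in> space (noise n d). S \<omega> \<le> 0}"
    by (simp add: measure_Un_le)
  with high low show ?thesis by (simp add: T_def)
qed

lemma prob_bad_event_mismatched:
  assumes "i < n" "j < n" "\<sigma> j > 0" "\<sigma> (\<pi>s i) > 0" "j \<noteq> \<pi>s i"
    and "1 \<le> d" "0 < L" "32*L \<le> k" "256 * real d * L \<le> k^2"
    and "k \<le> pair_noncentrality d \<theta> \<sigma> \<pi>s j i"
  shows "measure (noise n d) (bad_event n d \<theta> \<sigma> \<pi>s (real d + k/4) j i) \<le> exp (-L)"
proof -
  define T where "T = real d + k/4"
  obtain u where u: "0 < u"
    "u*T - u * pair_noncentrality d \<theta> \<sigma> \<pi>s j i/(1 + 2*u) - real d/2 * ln (1 + 2*u) \<le> -L"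
    using exists_lower_chernoff_exponent[of "real d" L k "pair_noncentrality d \<theta> \<sigma> \<pi>s j i"] assms(6-10)
    by (auto simp: T_def)
  have "measure (noise n d) (bad_event n d \<theta> \<sigma> \<pi>s T j i)
      = measure (noise n d) {\<omega> \<in> space (noise n d). pair_stat n d \<theta> \<sigma> \<pi>s j i \<omega> \<le> T}"
    using assms(5) by (simp add: bad_event_def)
  also have "\<dots> \<le> exp (u*T - u * pair_noncentrality d \<theta> \<sigma> \<pi>s j i/(1 + 2*u) - real d/2 * ln (1 + 2*u))"
    using assms(1-4) u(1) by (intro pair_stat_lower_tail)
  also have "\<dots> \<le> exp (-L)" using u(2) by simp
  finally show ?thesis by (simp add: T_def)
qed

lemma pair_noncentrality_ge_kappa_bar:
  assumes "i < n" "j < n" "\<pi>s i < n" "j \<noteq> \<pi>s i" "0 \<le> kappa_bar n d \<theta> \<sigma>"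
  shows "(kappa_bar n d \<theta> \<sigma>)^2 \<le> pair_noncentrality d \<theta> \<sigma> \<pi>s j i"
proof -
  define F where "F i j = sqrt (sqdist d (\<theta> i) (\<theta> j)) / sqrt ((\<sigma> i)^2 + (\<sigma> j)^2)" for i j
  have "finite {F i j | i j. i < n \<and> j < n \<and> i \<noteq> j}"
    by (rule finite_subset[of _ "(\<lambda>(i, j). F i j) ` ({..<n} \<times> {..<n})"]) auto
  moreover have "F j (\<pi>s i) \<in> {F i j | i j. i < n \<and> j < n \<and> i \<noteq> j}"
    using assms by blast
  ultimately have "kappa_bar n d \<theta> \<sigma> \<le> F j (\<pi>s i)"
    unfolding kappa_bar_def F_def[symmetric] by (rule Min_le)
  then have "(kappa_bar n d \<theta> \<sigma>)^2 \<le> (F j (\<pi>s i))^2"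
    using assms(5) by (intro power_mono) auto
  also have "(F j (\<pi>s i))^2 = pair_noncentrality d \<theta> \<sigma> \<pi>s j i"
    by (simp add: F_def pair_noncentrality_def power_divide sqdist_def sum_nonneg)
  finally show ?thesis .
qed

text \<open>The first term of the threshold is used only through the weaker
  \<open>32 ln (4 n^2 / \<alpha>) \<le> \<kappa>^2\<close>.\<close>
lemma kappa_threshold_bounds:
  fixes n d :: nat and \<alpha> \<kappa> :: real
  assumes n: "2 \<le> n" and \<alpha>: "0 < \<alpha>" "\<alpha> < 1"
    and \<kappa>: "4 * max (sqrt (2 * ln (8 * real n ^ 2 / \<alpha>))) (root 4 (real d * ln (4 * real n ^ 2 / \<alpha>))) \<le> \<kappa>"
  defines "L \<equiv> ln (4 * real n ^ 2 / \<alpha>)"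
  shows "0 < L" "exp (-L) = \<alpha> / (4 * real n ^ 2)" "0 \<le> \<kappa>"
    and "32 * L \<le> \<kappa>^2" "256 * real d * L \<le> (\<kappa>^2)^2"
proof -
  have "16 \<le> 4 * real n ^ 2" using n power_mono[of 2 "real n" 2] by simp
  then have big: "1 < 4 * real n ^ 2 / \<alpha>" using \<alpha> by simp
  then show L: "0 < L" by (simp add: L_def)
  show "exp (-L) = \<alpha> / (4 * real n ^ 2)" using big by (simp add: L_def exp_minus)
  have "4 * real n ^ 2 / \<alpha> \<le> 8 * real n ^ 2 / \<alpha>" using \<alpha> by (intro divide_right_mono) auto
  then have L8: "L \<le> ln (8 * real n ^ 2 / \<alpha>)" using big by (simp add: L_def)
  then have "sqrt (2 * L) \<le> sqrt (2 * ln (8 * real n ^ 2 / \<alpha>))" by simp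
  then have "4 * sqrt (2 * L) \<le> \<kappa>" using \<kappa> by linarith
  moreover have "0 \<le> sqrt (2 * L)" using L by simp
  ultimately show \<kappa>0: "0 \<le> \<kappa>" by linarith
  have "(4 * sqrt (2 * L))^2 \<le> \<kappa>^2"
    using \<open>4 * sqrt (2 * L) \<le> \<kappa>\<close> L by (intro power_mono) auto
  then show "32 * L \<le> \<kappa>^2" using L by (simp add: power_mult_distrib)
  have dL: "0 \<le> real d * L" using L by simp
  have "(4 * root 4 (real d * L))^4 \<le> \<kappa>^4"
    using \<kappa> dL by (intro power_mono) (auto simp: L_def)
  then show "256 * real d * L \<le> (\<kappa>^2)^2"
    using dL by (simp add: power_mult_distrib real_root_pow_pos2 flip: power_mult)
qed

lemma prob_bad_event_le:
  assumes "i < n" "j < n" "\<forall>i<n. 0 < \<sigma> i" "\<pi>s permutes {..<n}" "1 \<le> d" "0 \<le> kappa_bar n d \<theta> \<sigma>"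
    and "0 < L" "32 * L \<le> (kappa_bar n d \<theta> \<sigma>)^2" "256 * real d * L \<le> ((kappa_bar n d \<theta> \<sigma>)^2)^2"
  shows "measure (noise n d) (bad_event n d \<theta> \<sigma> \<pi>s (real d + (kappa_bar n d \<theta> \<sigma>)^2/4) j i)
    \<le> 2 * exp (-L)"
proof -
  have \<pi>s_i: "\<pi>s i < n" using permutes_in_image[OF assms(4)] assms(1) by simp
  have \<sigma>: "0 < \<sigma> j" "0 < \<sigma> (\<pi>s i)" using assms(2,3) \<pi>s_i by auto
  show ?thesis
  proof (cases "j = \<pi>s i")
    case True
    show ?thesis
      unfolding True by (rule prob_bad_event_matched[where \<pi>s=\<pi>s and \<sigma>=\<sigma>, OF assms(1) \<pi>s_i \<sigma>(2) assms(5,7-9)])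
  next
    case False
    have "(kappa_bar n d \<theta> \<sigma>)^2 \<le> pair_noncentrality d \<theta> \<sigma> \<pi>s j i"
      by (rule pair_noncentrality_ge_kappa_bar[where \<pi>s=\<pi>s, OF assms(1,2) \<pi>s_i False assms(6)])
    with False have "measure (noise n d) (bad_event n d \<theta> \<sigma> \<pi>s (real d + (kappa_bar n d \<theta> \<sigma>)^2/4) j i)
        \<le> exp (-L)"
      by (intro prob_bad_event_mismatched[where \<pi>s=\<pi>s and \<sigma>=\<sigma>, OF assms(1,2) \<sigma>]) (use assms(5,7-9) in auto)
    then show ?thesis using exp_gt_zero[of "-L"] by linarith
  qed
qed

lemma prob_union_bad_events_le:
  assumes "2 \<le> n" "1 \<le> d" "0 < \<alpha>" "\<alpha> < 1" "\<forall>i<n. 0 < \<sigma> i" "\<pi>s permutes {..<n}"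
    and "4 * max (sqrt (2 * ln (8 * real n ^ 2 / \<alpha>))) (root 4 (real d * ln (4 * real n ^ 2 / \<alpha>)))
      \<le> kappa_bar n d \<theta> \<sigma>"
  shows "measure (noise n d)
      (\<Union>(i, j) \<in> {..<n} \<times> {..<n}. bad_event n d \<theta> \<sigma> \<pi>s (real d + (kappa_bar n d \<theta> \<sigma>)^2/4) j i)
    \<le> \<alpha>"
proof -
  define L where "L = ln (4 * real n ^ 2 / \<alpha>)"
  define B where "B = (\<lambda>(i, j). bad_event n d \<theta> \<sigma> \<pi>s (real d + (kappa_bar n d \<theta> \<sigma>)^2/4) j i)"
  note threshold = kappa_threshold_bounds[OF assms(1,3,4,7), folded L_def]
  have "B ij \<in> sets (noise n d) \<and> measure (noise n d) (B ij) \<le> 2 * exp (-L)"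
    if mem: "ij \<in> {..<n} \<times> {..<n}" for ij
  proof -
    obtain i j where ij: "ij = (i, j)" "i < n" "j < n" using mem by blast
    have "B ij \<in> sets (noise n d)"
      unfolding B_def ij(1) split by (rule bad_event_sets[OF ij(2,3) assms(5,6)])
    moreover have "measure (noise n d) (B ij) \<le> 2 * exp (-L)"
      unfolding B_def ij(1) split
      by (rule prob_bad_event_le[where \<pi>s=\<pi>s and \<sigma>=\<sigma>, OF ij(2,3) assms(5,6,2) threshold(3,1,4,5)])
    ultimately show ?thesis ..
  qed
  then have "measure (noise n d) (\<Union>ij \<in> {..<n} \<times> {..<n}. B ij)
      \<le> (\<Sum>ij \<in> {..<n} \<times> {..<n}. 2 * exp (-L))"
    by (intro order_trans[OF measure_UNION_le sum_mono]) auto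
  also have "\<dots> = \<alpha> / 2" using threshold(2) assms(1) by (simp add: power2_eq_square)
  finally show ?thesis using assms(3) by (simp add: B_def)
qed

section \<open>Exactness of the estimators\<close>

lemma permutes_neq_ex:
  assumes "p permutes {..<n}" "q permutes {..<n}" "q \<noteq> p"
  shows "\<exists>i<n. q i \<noteq> p i"
proof (rule ccontr)
  assume "\<not> (\<exists>i<n. q i \<noteq> p i)"
  then have "q x = p x" for x
    using assms(1,2) by (cases "x < n") (auto simp: permutes_not_in)
  then show False using assms(3) by auto
qed

lemma sum_perm_diag_less:
  fixes c :: "nat \<Rightarrow> nat \<Rightarrow> real"
  assumes p: "p permutes {..<n}" and q: "q permutes {..<n}" and qp: "q \<noteq> p"
    and diag: "\<And>i. i < n \<Longrightarrow> c (p i) i < T"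
    and cross: "\<And>i j. i < n \<Longrightarrow> j < n \<Longrightarrow> j \<noteq> p i \<Longrightarrow> T < c j i"
  shows "(\<Sum>i<n. c (p i) i) < (\<Sum>i<n. c (q i) i)"
proof (rule sum_strict_mono_ex1)
  show "finite {..<n}" by simp
  show "\<forall>i\<in>{..<n}. c (p i) i \<le> c (q i) i"
  proof
    fix i assume i: "i \<in> {..<n}"
    then have qi: "q i < n" using permutes_in_image[OF q] by auto
    show "c (p i) i \<le> c (q i) i"
      using diag[of i] cross[of i "q i"] i qi by (cases "q i = p i") auto
  qed
  obtain i where i: "i < n" "q i \<noteq> p i" using permutes_neq_ex[OF p q qp] by blast
  then have qi: "q i < n" using permutes_in_image[OF q] by auto
  show "\<exists>i\<in>{..<n}. c (p i) i < c (q i) i"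
    using diag[of i] cross[of i "q i"] i qi by force
qed

lemma ln_sum_squares_ge:
  fixes a b :: real
  assumes "0 < a" "0 < b"
  shows "ln 2 + ln a + ln b \<le> ln (a^2 + b^2)"
proof -
  have "ln 2 + ln a + ln b = ln (2*a*b)" using assms by (simp add: ln_mult_pos)
  also have "\<dots> \<le> ln (a^2 + b^2)" using sum_squares_bound[of a b] assms by (intro ln_mono) auto
  finally show ?thesis .
qed

text \<open>By AM-GM, \<open>ln (a^2 + b^2) \<ge> ln 2 + ln a + ln b\<close>, with equality for \<open>a = b\<close>; the sum of the
  right-hand sides does not depend on the permutation.\<close>
lemma sum_ln_sum_squares_perm_ge:
  fixes \<sigma> :: "nat \<Rightarrow> real"
  assumes p: "p permutes {..<n}" and q: "q permutes {..<n}" and sig: "\<And>i. i < n \<Longrightarrow> 0 < \<sigma> i"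
  shows "(\<Sum>i<n. ln ((\<sigma> (p i))^2 + (\<sigma> (p i))^2)) \<le> (\<Sum>i<n. ln ((\<sigma> (q i))^2 + (\<sigma> (p i))^2))"
proof -
  have pn: "p i < n" "q i < n" if "i < n" for i
    using permutes_in_image[OF p] permutes_in_image[OF q] that by auto
  have perm_inv: "(\<Sum>i<n. ln (\<sigma> (r i))) = (\<Sum>i<n. ln (\<sigma> i))" if "r permutes {..<n}" for r
    using sum.permute[OF that, of "\<lambda>i. ln (\<sigma> i)"] by (simp add: comp_def)
  have "(\<Sum>i<n. ln ((\<sigma> (p i))^2 + (\<sigma> (p i))^2)) = (\<Sum>i<n. ln 2 + ln (\<sigma> (p i)) + ln (\<sigma> (p i)))"
  proof (intro sum.cong refl)
    fix i assume "i \<in> {..<n}"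
    then have "0 < \<sigma> (p i)" using sig pn by auto
    then show "ln ((\<sigma> (p i))^2 + (\<sigma> (p i))^2) = ln 2 + ln (\<sigma> (p i)) + ln (\<sigma> (p i))"
      by (simp add: ln_mult_pos power2_eq_square flip: mult_2)
  qed
  also have "\<dots> = (\<Sum>i<n. ln 2 + ln (\<sigma> (q i)) + ln (\<sigma> (p i)))"
    using perm_inv[OF p] perm_inv[OF q] by (simp add: sum.distrib flip: sum_distrib_left)
  also have "\<dots> \<le> (\<Sum>i<n. ln ((\<sigma> (q i))^2 + (\<sigma> (p i))^2))"
    using sig pn by (intro sum_mono ln_sum_squares_ge) auto
  finally show ?thesis .
qed

lemma sum_ln_perm_diag_less:
  fixes c :: "nat \<Rightarrow> nat \<Rightarrow> real" and \<sigma> :: "nat \<Rightarrow> real"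
  assumes p: "p permutes {..<n}" and q: "q permutes {..<n}" and qp: "q \<noteq> p"
    and diag: "\<And>i. i < n \<Longrightarrow> c (p i) i < T" "\<And>i. i < n \<Longrightarrow> 0 < c (p i) i"
    and cross: "\<And>i j. i < n \<Longrightarrow> j < n \<Longrightarrow> j \<noteq> p i \<Longrightarrow> T < c j i"
    and sig: "\<And>i. i < n \<Longrightarrow> 0 < \<sigma> i" and T: "0 < T"
  shows "(\<Sum>i<n. ln (c (p i) i * ((\<sigma> (p i))^2 + (\<sigma> (p i))^2)))
       < (\<Sum>i<n. ln (c (q i) i * ((\<sigma> (q i))^2 + (\<sigma> (p i))^2)))"
proof -
  have pn: "p i < n" "q i < n" if "i < n" for i
    using permutes_in_image[OF p] permutes_in_image[OF q] that by auto
  have c_pos: "0 < c (r i) i" if "r permutes {..<n}" "i < n" for r i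
  proof -
    have "r i < n" using permutes_in_image[OF that(1)] that(2) by simp
    then show ?thesis using diag(2)[OF that(2)] cross[OF that(2)] T by (cases "r i = p i") force+
  qed
  have split: "(\<Sum>i<n. ln (c (r i) i * ((\<sigma> (r i))^2 + (\<sigma> (p i))^2)))
      = (\<Sum>i<n. ln (c (r i) i)) + (\<Sum>i<n. ln ((\<sigma> (r i))^2 + (\<sigma> (p i))^2))"
    if r: "r permutes {..<n}" for r
  proof -
    have "0 < (\<sigma> (r i))^2 + (\<sigma> (p i))^2" if "i < n" for i
      using sig[of "r i"] permutes_in_image[OF r] that by (simp add: add_pos_nonneg)
    then show ?thesis
      using c_pos[OF r] by (simp add: ln_mult_pos flip: sum.distrib)
  qed
  have "(\<Sum>i<n. ln (c (p i) i)) < (\<Sum>i<n. ln (c (q i) i))"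
  proof (rule sum_perm_diag_less[OF p q qp, where T="ln T"])
    show "ln (c (p i) i) < ln T" if "i < n" for i
      using diag(1,2)[OF that] by simp
    show "ln T < ln (c j i)" if "i < n" "j < n" "j \<noteq> p i" for i j
      using cross[OF that] T by simp
  qed
  moreover have "(\<Sum>i<n. ln ((\<sigma> (p i))^2 + (\<sigma> (p i))^2)) \<le> (\<Sum>i<n. ln ((\<sigma> (q i))^2 + (\<sigma> (p i))^2))"
    by (rule sum_ln_sum_squares_perm_ge[OF p q sig])
  ultimately show ?thesis
    unfolding split[OF p] split[OF q] by linarith
qed

lemma cost_LSNS_obs:
  "cost_LSNS n d \<sigma> (\<sigma> \<circ> \<pi>s) (obs n d \<theta> \<sigma> \<pi>s \<omega>) q = (\<Sum>i<n. pair_stat n d \<theta> \<sigma> \<pi>s (q i) i \<omega>)"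
  by (simp add: cost_LSNS_def pair_stat_def)

lemma cost_LSL_obs:
  assumes q: "q permutes {..<n}" and perm: "\<pi>s permutes {..<n}" and sig: "\<forall>i<n. 0 < \<sigma> i"
  shows "cost_LSL n d (obs n d \<theta> \<sigma> \<pi>s \<omega>) q
       = (\<Sum>i<n. ln (pair_stat n d \<theta> \<sigma> \<pi>s (q i) i \<omega> * ((\<sigma> (q i))^2 + (\<sigma> (\<pi>s i))^2)))"
  unfolding cost_LSL_def
proof (intro sum.cong refl)
  fix i assume "i \<in> {..<n}"
  then have "0 < \<sigma> (q i)" "0 < \<sigma> (\<pi>s i)"
    using sig permutes_in_image[OF q] permutes_in_image[OF perm] by auto
  then show "ln (sqdist d (Xobs (obs n d \<theta> \<sigma> \<pi>s \<omega>) (q i)) (Xsharp (obs n d \<theta> \<sigma> \<pi>s \<omega>) i))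
      = ln (pair_stat n d \<theta> \<sigma> \<pi>s (q i) i \<omega> * ((\<sigma> (q i))^2 + (\<sigma> (\<pi>s i))^2))"
    by (simp add: pair_stat_def add_pos_pos)
qed

lemma est_eq_off_bad_events:
  assumes perm: "\<pi>s permutes {..<n}" and sig: "\<forall>i<n. 0 < \<sigma> i" and T: "0 < T"
    and argmin: "(\<forall>y \<in> space (obs_space n d). is_argmin_perm n (cost_LSNS n d \<sigma> (\<sigma> \<circ> \<pi>s) y) (est y))
         \<or> (\<forall>y \<in> space (obs_space n d). is_argmin_perm n (cost_LSL n d y) (est y))"
    and \<omega>: "\<omega> \<in> space (noise n d)"
    and good: "\<And>i j. i < n \<Longrightarrow> j < n \<Longrightarrow> \<omega> \<notin> bad_event n d \<theta> \<sigma> \<pi>s T j i"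
  shows "est (obs n d \<theta> \<sigma> \<pi>s \<omega>) = \<pi>s"
proof (rule ccontr)
  define y where "y = obs n d \<theta> \<sigma> \<pi>s \<omega>"
  define c where "c j i = pair_stat n d \<theta> \<sigma> \<pi>s j i \<omega>" for j i
  assume "est (obs n d \<theta> \<sigma> \<pi>s \<omega>) \<noteq> \<pi>s"
  then have ne: "est y \<noteq> \<pi>s" by (simp add: y_def)
  have matched: "c (\<pi>s i) i < T" "0 < c (\<pi>s i) i" if "i < n" for i
  proof -
    have "\<pi>s i < n" using permutes_in_image[OF perm] that by simp
    then show "c (\<pi>s i) i < T" "0 < c (\<pi>s i) i"
      using good[OF that \<open>\<pi>s i < n\<close>] \<omega> by (auto simp: bad_event_def c_def)
  qed
  have mismatched: "T < c j i" if "i < n" "j < n" "j \<noteq> \<pi>s i" for i j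
    using good[OF that(1,2)] \<omega> that(3) by (auto simp: bad_event_def c_def)
  have "y \<in> space (obs_space n d)"
    unfolding y_def using measurable_space[OF obs_measurable \<omega>] .
  with argmin perm have est: "est y permutes {..<n}"
    and "cost_LSNS n d \<sigma> (\<sigma> \<circ> \<pi>s) y (est y) \<le> cost_LSNS n d \<sigma> (\<sigma> \<circ> \<pi>s) y \<pi>s
         \<or> cost_LSL n d y (est y) \<le> cost_LSL n d y \<pi>s"
    unfolding is_argmin_perm_def by blast+
  moreover have "(\<Sum>i<n. c (\<pi>s i) i) < (\<Sum>i<n. c (est y i) i)"
    using matched mismatched by (intro sum_perm_diag_less[OF perm est ne]) auto
  moreover have "(\<Sum>i<n. ln (c (\<pi>s i) i * ((\<sigma> (\<pi>s i))^2 + (\<sigma> (\<pi>s i))^2)))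
      < (\<Sum>i<n. ln (c (est y i) i * ((\<sigma> (est y i))^2 + (\<sigma> (\<pi>s i))^2)))"
    using matched mismatched sig T by (intro sum_ln_perm_diag_less[OF perm est ne]) auto
  moreover have "cost_LSNS n d \<sigma> (\<sigma> \<circ> \<pi>s) y q = (\<Sum>i<n. c (q i) i)" for q
    by (simp add: y_def c_def cost_LSNS_obs)
  moreover have "cost_LSL n d y q = (\<Sum>i<n. ln (c (q i) i * ((\<sigma> (q i))^2 + (\<sigma> (\<pi>s i))^2)))"
    if "q permutes {..<n}" for q
    using cost_LSL_obs[OF that perm sig] by (simp add: y_def c_def)
  ultimately show False
    using est perm by fastforce
qed

section \<open>The expected Hamming distance\<close>

lemma delta_H_le1: "0 < n \<Longrightarrow> delta_H n p q \<le> 1"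
proof -
  assume n: "0 < n"
  have "card {k \<in> {..<n}. p k \<noteq> q k} \<le> card {..<n}" by (rule card_mono) auto
  then show ?thesis using n by (simp add: delta_H_def)
qed

lemma delta_H_nonneg: "0 \<le> delta_H n p q" by (simp add: delta_H_def)

lemma delta_H_self: "delta_H n p p = 0" by (simp add: delta_H_def)

lemma expected_delta_H_le_measure:
  assumes n: "0 < n"
    and est: "est \<in> measurable (obs_space n d) (count_space UNIV)"
    and U: "U \<in> sets (noise n d)"
    and correct: "\<And>\<omega>. \<omega> \<in> space (noise n d) \<Longrightarrow> \<omega> \<notin> U \<Longrightarrow> est (obs n d \<theta> \<sigma> \<pi>s \<omega>) = \<pi>s"
  shows "(\<integral>y. delta_H n (est y) \<pi>s \<partial>data_law n d \<theta> \<sigma> \<pi>s) \<le> measure (noise n d) U"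
proof -
  interpret prob_space "noise n d" by (rule prob_space_noise)
  have f: "(\<lambda>y. delta_H n (est y) \<pi>s) \<in> borel_measurable (obs_space n d)"
    using measurable_compose[OF est, of "\<lambda>p. delta_H n p \<pi>s" borel] by simp
  have "(\<integral>y. delta_H n (est y) \<pi>s \<partial>data_law n d \<theta> \<sigma> \<pi>s)
      = (\<integral>\<omega>. delta_H n (est (obs n d \<theta> \<sigma> \<pi>s \<omega>)) \<pi>s \<partial>noise n d)"
    unfolding data_law_def by (rule integral_distr[OF obs_measurable f])
  also have "\<dots> \<le> (\<integral>\<omega>. indicator U \<omega> \<partial>noise n d)"
  proof (rule integral_mono)
    show "integrable (noise n d) (\<lambda>\<omega>. delta_H n (est (obs n d \<theta> \<sigma> \<pi>s \<omega>)) \<pi>s)"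
      using measurable_compose[OF obs_measurable f] delta_H_le1[OF n] delta_H_nonneg
      by (intro integrable_const_bound[where B=1]) auto
    show "integrable (noise n d) (indicator U :: _ \<Rightarrow> real)"
      using U by (intro integrable_const_bound[where B=1]) (auto simp: indicator_def)
    show "delta_H n (est (obs n d \<theta> \<sigma> \<pi>s \<omega>)) \<pi>s \<le> indicator U \<omega>" if "\<omega> \<in> space (noise n d)" for \<omega>
      using correct[OF that] delta_H_le1[OF n] delta_H_self by (cases "\<omega> \<in> U") auto
  qed
  also have "\<dots> = measure (noise n d) U" using U by simp
  finally show ?thesis .
qed

theorem theorem7:
  fixes n d :: nat and \<alpha> :: real and \<sigma> :: "nat \<Rightarrow> real"
    and \<pi>s :: "nat \<Rightarrow> nat" and \<theta> :: "nat \<Rightarrow> nat \<Rightarrow> real"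
    and est :: "(bool \<times> nat \<times> nat \<Rightarrow> real) \<Rightarrow> (nat \<Rightarrow> nat)"
  assumes "n \<ge> 2" and "d \<ge> 1" and "0 < \<alpha>" and "\<alpha> < 1"
    and "\<forall>i<n. \<sigma> i > 0"
    and "\<pi>s permutes {..<n}"
    and "est \<in> measurable (obs_space n d) (count_space UNIV)"
    and "(\<forall>y \<in> space (obs_space n d). is_argmin_perm n (cost_LSNS n d \<sigma> (\<sigma> \<circ> \<pi>s) y) (est y))
         \<or> (\<forall>y \<in> space (obs_space n d). is_argmin_perm n (cost_LSL n d y) (est y))"
    and "kappa_bar n d \<theta> \<sigma> \<ge>
           4 * max (sqrt (2 * ln (8 * real n ^ 2 / \<alpha>))) (root 4 (real d * ln (4 * real n ^ 2 / \<alpha>)))"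
  shows "(\<integral>y. delta_H n (est y) \<pi>s \<partial>data_law n d \<theta> \<sigma> \<pi>s) \<le> \<alpha>"
proof -
  note sig = assms(5) and perm = assms(6)
  define T where "T = real d + (kappa_bar n d \<theta> \<sigma>)^2/4"
  define U where "U = (\<Union>(i, j) \<in> {..<n} \<times> {..<n}. bad_event n d \<theta> \<sigma> \<pi>s T j i)"
  have "U \<in> sets (noise n d)"
    unfolding U_def by (rule union_bad_events_sets[OF sig perm])
  moreover have "est (obs n d \<theta> \<sigma> \<pi>s \<omega>) = \<pi>s" if "\<omega> \<in> space (noise n d)" "\<omega> \<notin> U" for \<omega>
  proof (rule est_eq_off_bad_events[OF perm sig _ assms(8) that(1)])
    show "0 < T" using assms(2) by (simp add: T_def add_pos_nonneg)
    show "\<omega> \<notin> bad_event n d \<theta> \<sigma> \<pi>s T j i" if "i < n" "j < n" for i j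
      using \<open>\<omega> \<notin> U\<close> that unfolding U_def by blast
  qed
  ultimately have "(\<integral>y. delta_H n (est y) \<pi>s \<partial>data_law n d \<theta> \<sigma> \<pi>s) \<le> measure (noise n d) U"
    using assms(1) by (intro expected_delta_H_le_measure[OF _ assms(7)]) auto
  also have "measure (noise n d) U \<le> \<alpha>"
    unfolding U_def T_def using assms(1-6,9) by (rule prob_union_bad_events_le)
  finally show ?thesis .
qed

end
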